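(* Let $F$ be a unitary $N=(2,2)$ full vertex operator superalgebra and $d=G^+_{-1/2}+\bar G^+_{-1/2}$. Then the map $\bigoplus_{p,q\in\mathbb R}C^{(p,q)}(F)_{cc}\to H(F,d)=\ker d/\mathrm{Im}\,d$, sending a vector to its cohomology class, is a well-defined linear isomorphism.
   Context: A unitary $N=(2,2)$ full VOA is a full vertex operator superalgebra $F=\bigoplus_{(h,\bar h)\in\mathbb R^2}F_{h,\bar h}$ (Moriwaki's axioms: real-analytic locality/associativity of $Y(a,\underline z)=\sum_{r,s}a(r,s)z^{-r-1}\bar z^{-s-1}$, vacuum $\mathbf 1$, $F_{0,0}=\mathbb C\mathbf 1$, finite-dimensional bounded-below bigrading with $F_{h,\bar h}=0$ unless $h-\bar h\in\frac12\mathbb Z$, conformal vectors $\omega\in F_{2,0},\bar\omega\in F_{0,2}$ giving commuting Virasoro actions $L(n),\bar L(n)$ of central charges $c,\bar c>0$ with $L(0),\bar L(0)$ the bigrading) with holomorphic $\tau^\pm\in F_{3/2,0}$, $J\in F_{1,0}$ and antiholomorphic $\bar\tau^\pm\in F_{0,3/2}$, $\bar J\in F_{0,1}$ whose modes $G^\pm_r,J_n$ ($Y(\tau^\pm,\underline z)=\sum_{r\in\frac12+\mathbb Z}G^\pm_rz^{-r-3/2}$, $Y(J,\underline z)=\sum J_nz^{-n-1}$) and $\bar G^\pm_r,\bar J_n$ satisfy two supercommuting copies of the $N=2$ Neveu–Schwarz relations ($[J_m,J_n]=\frac c3m\delta_{m+n,0}$, $[J_m,G^\pm_r]=\pm G^\pm_{m+r}$,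 $[L_m,G^\pm_r]=(\frac m2-r)G^\pm_{m+r}$, $[L_m,J_n]=-nJ_{m+n}$, $[G^\pm_r,G^\pm_s]_+=0$, $[G^+_r,G^-_s]_+=L_{r+s}+\frac12(r-s)J_{r+s}+\frac c6(r^2-\frac14)\delta_{r+s,0}$; barred with $\bar c$), $J_0,\bar J_0$ semisimple with real eigenvalues, $J_0-\bar J_0$ integral with $\exp(\pi i(J_0-\bar J_0))$ the parity operator; plus an invariant symmetric bilinear form ($(\mathbf 1,\mathbf 1)=1$, $(u,Y(a,\underline z)v)=(Y(e^{L(1)z+\bar L(1)\bar z}(-1)^{(L(0)-\bar L(0))+2(L(0)-\bar L(0))^2}z^{-2L(0)}\bar z^{-2\bar L(0)}a,\underline z^{-1})u,v)$) and an anti-linear involutive automorphism $\phi$ with $\phi(J)=-J,\phi(\tau^\pm)=\tau^\mp,\phi(\bar J)=-\bar J,\phi(\bar\tau^\pm)=-\bar\tau^\mp$ and $(\phi(\cdot),\cdot)$ positive definite. $C^{(p,q)}(F)_{cc}$ is the space of vectors $v$ with $J_0v=pv$, $\bar J_0v=qv$, $L_nv=\bar L_nv=J_nv=\bar J_nv=0$ ($n\ge1$), $G^\pm_rv=\bar G^\pm_rv=0$ ($r\ge\frac12$), and $G^+_{-1/2}v=\bar G^+_{-1/2}v=0$ (chiral-chiral primary vectors of charge $(p,q)$). *)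

theory Defs
  imports "HOL-Analysis.Analysis"
begin

text \<open>The underlying space F is the whole type 'v. The vertex operator
  Y(a,z) = sum_{r,s} a(r,s) z^(-r-1) zbar^(-s-1) is recorded through its modes:
  vY a r s b = a(r,s) b.\<close>

record 'v fvosa =
  cs    :: "complex \<Rightarrow> 'v \<Rightarrow> 'v"   \<comment> \<open>complex scalar multiplication on F\<close>
  vY    :: "'v \<Rightarrow> real \<Rightarrow> real \<Rightarrow> 'v \<Rightarrow> 'v"
  vac   :: 'v
  omg   :: 'v
  omgb  :: 'v
  taup  :: 'v
  taum  :: 'v
  Jvec  :: 'v
  taubp :: 'v
  taubm :: 'v
  Jbvec :: 'v
  cch   :: real
  ccb   :: real
  bform :: "'v \<Rightarrow> 'v \<Rightarrow> complex"
  phi   :: "'v \<Rightarrow> 'v"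

definition antilin :: "('v::ab_group_add) fvosa \<Rightarrow> ('v \<Rightarrow> 'v) \<Rightarrow> bool" where
  "antilin F f \<longleftrightarrow> (\<forall>x y. f (x + y) = f x + f y) \<and> (\<forall>c x. f (cs F c x) = cs F (cnj c) (f x))"

definition fin_dim :: "('v::ab_group_add) fvosa \<Rightarrow> 'v set \<Rightarrow> bool" where
  "fin_dim F S \<longleftrightarrow> (\<exists>B. finite B \<and> S \<subseteq> module.span (cs F) B)"

definition hZ :: "real set" where
  "hZ = {r. r - 1/2 \<in> \<int>}"

text \<open>z^a zbar^b for a - b integral: |z|^(2b) z^(a-b)\<close>
definition zpow :: "complex \<Rightarrow> real \<Rightarrow> real \<Rightarrow> complex" where
  "zpow z a b = (if z = 0 then 0 else complex_of_real (cmod z powr (2 * b)) * z powi \<lfloor>a - b\<rfloor>)"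

text \<open>real-analytic functions on an open subset of C^2 (regarded as R^4): locally given by
  an (unconditionally) convergent power series in z1-p1, conj(z1-p1), z2-p2, conj(z2-p2)\<close>
definition real_analytic_on2 :: "(complex \<times> complex \<Rightarrow> complex) \<Rightarrow> (complex \<times> complex) set \<Rightarrow> bool" where
  "real_analytic_on2 f S \<longleftrightarrow> open S \<and>
     (\<forall>p\<in>S. \<exists>e>0. ball p e \<subseteq> S \<and> (\<exists>c :: nat \<times> nat \<times> nat \<times> nat \<Rightarrow> complex.
        \<forall>w\<in>ball p e. ((\<lambda>(i,j,k,l). c (i,j,k,l) * (fst w - fst p) ^ i * cnj (fst w - fst p) ^ j
                         * (snd w - snd p) ^ k * cnj (snd w - snd p) ^ l) has_sum f w) UNIV))"

definition X2 :: "(complex \<times> complex) set" where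
  "X2 = {(z1, z2). z1 \<noteq> 0 \<and> z2 \<noteq> 0 \<and> z1 \<noteq> z2}"

text \<open>Y(omega,z) = sum L(n) z^(-n-2); Y(omegabar,z) = sum Lbar(n) zbar^(-n-2);
  Y(tau,z) = sum G_r z^(-r-3/2); Y(J,z) = sum J_n z^(-n-1); similarly barred.\<close>
definition Lm :: "'v fvosa \<Rightarrow> real \<Rightarrow> 'v \<Rightarrow> 'v" where
  "Lm F n = vY F (omg F) (n + 1) (-1)"
definition Lbm :: "'v fvosa \<Rightarrow> real \<Rightarrow> 'v \<Rightarrow> 'v" where
  "Lbm F n = vY F (omgb F) (-1) (n + 1)"
definition Gp :: "'v fvosa \<Rightarrow> real \<Rightarrow> 'v \<Rightarrow> 'v" where
  "Gp F r = vY F (taup F) (r + 1/2) (-1)"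
definition Gm :: "'v fvosa \<Rightarrow> real \<Rightarrow> 'v \<Rightarrow> 'v" where
  "Gm F r = vY F (taum F) (r + 1/2) (-1)"
definition Jm :: "'v fvosa \<Rightarrow> real \<Rightarrow> 'v \<Rightarrow> 'v" where
  "Jm F n = vY F (Jvec F) n (-1)"
definition Gbp :: "'v fvosa \<Rightarrow> real \<Rightarrow> 'v \<Rightarrow> 'v" where
  "Gbp F r = vY F (taubp F) (-1) (r + 1/2)"
definition Gbm :: "'v fvosa \<Rightarrow> real \<Rightarrow> 'v \<Rightarrow> 'v" where
  "Gbm F r = vY F (taubm F) (-1) (r + 1/2)"
definition Jbm :: "'v fvosa \<Rightarrow> real \<Rightarrow> 'v \<Rightarrow> 'v" where
  "Jbm F n = vY F (Jbvec F) (-1) n"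

definition Fgr :: "('v::ab_group_add) fvosa \<Rightarrow> real \<Rightarrow> real \<Rightarrow> 'v set" where
  "Fgr F h hb = {v. Lm F 0 v = cs F (complex_of_real h) (v) \<and> Lbm F 0 v = cs F (complex_of_real hb) v}"

definition Fpar :: "('v::ab_group_add) fvosa \<Rightarrow> bool \<Rightarrow> 'v set" where
  "Fpar F b = {v. \<exists>S g. finite S \<and> (\<forall>x\<in>S. g x \<in> Fgr F (fst x) (snd x) \<and> ((fst x - snd x \<in> \<int>) = (\<not> b)))
                 \<and> v = sum g S}"

text \<open>restricted dual F^v = direct sum of the duals of the F_(h,hb)\<close>
definition rdual :: "('v::ab_group_add) fvosa \<Rightarrow> ('v \<Rightarrow> complex) \<Rightarrow> bool" where
  "rdual F u \<longleftrightarrow> Vector_Spaces.linear (cs F) (*) u \<and> finite {(h, hb). \<exists>v\<in>Fgr F h hb. u v \<noteq> 0}"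

text \<open>series u(Y(a1,z1)Y(a2,z2)a3), u(Y(a2,z2)Y(a1,z1)a3), u(Y(Y(a1,z0)a2,z2)a3)\<close>
definition corr12 :: "('v::ab_group_add) fvosa \<Rightarrow> ('v \<Rightarrow> complex) \<Rightarrow> 'v \<Rightarrow> 'v \<Rightarrow> 'v \<Rightarrow> complex \<Rightarrow> complex
    \<Rightarrow> real \<times> real \<times> real \<times> real \<Rightarrow> complex" where
  "corr12 F u a1 a2 a3 z1 z2 = (\<lambda>(r, s, r', s'). u (vY F a1 r s (vY F a2 r' s' a3))
       * zpow z1 (- r - 1) (- s - 1) * zpow z2 (- r' - 1) (- s' - 1))"

definition corrA :: "('v::ab_group_add) fvosa \<Rightarrow> ('v \<Rightarrow> complex) \<Rightarrow> 'v \<Rightarrow> 'v \<Rightarrow> 'v \<Rightarrow> complex \<Rightarrow> complex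
    \<Rightarrow> real \<times> real \<times> real \<times> real \<Rightarrow> complex" where
  "corrA F u a1 a2 a3 z0 z2 = (\<lambda>(r, s, r', s'). u (vY F (vY F a1 r s a2) r' s' a3)
       * zpow z0 (- r - 1) (- s - 1) * zpow z2 (- r' - 1) (- s' - 1))"

definition hol_field :: "('v::ab_group_add) fvosa \<Rightarrow> 'v \<Rightarrow> bool" where
  "hol_field F a \<longleftrightarrow> (\<forall>r s. \<not> (s = -1 \<and> r \<in> \<int>) \<longrightarrow> vY F a r s = (\<lambda>v. 0))"
definition ahol_field :: "('v::ab_group_add) fvosa \<Rightarrow> 'v \<Rightarrow> bool" where
  "ahol_field F a \<longleftrightarrow> (\<forall>r s. \<not> (r = -1 \<and> s \<in> \<int>) \<longrightarrow> vY F a r s = (\<lambda>v. 0))"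

definition full_VOSA :: "('v::ab_group_add) fvosa \<Rightarrow> bool" where
  "full_VOSA F \<longleftrightarrow>
    vector_space (cs F) \<and>
    (\<forall>a r s. Vector_Spaces.linear (cs F) (cs F) (vY F a r s)) \<and> (\<forall>r s b. Vector_Spaces.linear (cs F) (cs F) (\<lambda>a. vY F a r s b)) \<and>
    (\<forall>v. \<exists>S g. finite S \<and> (\<forall>x\<in>S. g x \<in> Fgr F (fst x) (snd x)) \<and> v = sum g S) \<and>
    (\<forall>h hb. Fgr F h hb \<noteq> {0} \<longrightarrow> 2 * (h - hb) \<in> \<int>) \<and>
    (\<forall>h hb. fin_dim F (Fgr F h hb)) \<and>
    (\<exists>N. \<forall>h hb. Fgr F h hb \<noteq> {0} \<longrightarrow> N \<le> h \<and> N \<le> hb) \<and>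
    Fgr F 0 0 = range (\<lambda>c. cs F c (vac F)) \<and> vac F \<noteq> 0 \<and>
    (\<forall>a b r s. vY F a r s b \<noteq> 0 \<longrightarrow> r - s \<in> \<int>) \<and>
    (\<forall>a b H. finite {(r, s). vY F a r s b \<noteq> 0 \<and> (- r - 1) + (- s - 1) \<le> H}) \<and>
    (\<forall>r s v. vY F (vac F) r s v = (if r = -1 \<and> s = -1 then v else 0)) \<and>
    (\<forall>a r s. vY F a r s (vac F) \<noteq> 0 \<longrightarrow> (- r - 1 \<in> \<nat> \<and> - s - 1 \<in> \<nat>)) \<and>
    (\<forall>a. vY F a (-1) (-1) (vac F) = a) \<and>
    (\<forall>b1 b2 a1 a2 a3 u. a1 \<in> Fpar F b1 \<longrightarrow> a2 \<in> Fpar F b2 \<longrightarrow> rdual F u \<longrightarrow>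
       (\<exists>f. real_analytic_on2 f X2 \<and>
          (\<forall>z1 z2. 0 < cmod z2 \<and> cmod z2 < cmod z1 \<longrightarrow>
              (\<lambda>x. norm (corr12 F u a1 a2 a3 z1 z2 x)) summable_on UNIV \<and>
              infsum (corr12 F u a1 a2 a3 z1 z2) UNIV = f (z1, z2)) \<and>
          (\<forall>z1 z2. 0 < cmod z1 \<and> cmod z1 < cmod z2 \<longrightarrow>
              (\<lambda>x. norm (corr12 F u a2 a1 a3 z2 z1 x)) summable_on UNIV \<and>
              (if b1 \<and> b2 then -1 else 1) * infsum (corr12 F u a2 a1 a3 z2 z1) UNIV = f (z1, z2)) \<and>
          (\<forall>z0 z2. 0 < cmod z0 \<and> cmod z0 < cmod z2 \<longrightarrow>
              (\<lambda>x. norm (corrA F u a1 a2 a3 z0 z2 x)) summable_on UNIV \<and>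
              infsum (corrA F u a1 a2 a3 z0 z2) UNIV = f (z0 + z2, z2)))) \<and>
    omg F \<in> Fgr F 2 0 \<and> omgb F \<in> Fgr F 0 2 \<and> hol_field F (omg F) \<and> ahol_field F (omgb F) \<and>
    (\<forall>a. Lm F (-1) a = vY F a (-2) (-1) (vac F)) \<and> (\<forall>a. Lbm F (-1) a = vY F a (-1) (-2) (vac F)) \<and>
    0 < cch F \<and> 0 < ccb F \<and>
    (\<forall>m\<in>\<int>. \<forall>n\<in>\<int>. \<forall>v. Lm F m (Lm F n v) - Lm F n (Lm F m v)
        = cs F (complex_of_real (m - n)) (Lm F (m + n) v) + (if m + n = 0 then cs F (complex_of_real (cch F / 12 * (m ^ 3 - m))) (v) else 0)) \<and>
    (\<forall>m\<in>\<int>. \<forall>n\<in>\<int>. \<forall>v. Lbm F m (Lbm F n v) - Lbm F n (Lbm F m v)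
        = cs F (complex_of_real (m - n)) (Lbm F (m + n) v) + (if m + n = 0 then cs F (complex_of_real (ccb F / 12 * (m ^ 3 - m))) (v) else 0)) \<and>
    (\<forall>m\<in>\<int>. \<forall>n\<in>\<int>. \<forall>v. Lm F m (Lbm F n v) = Lbm F n (Lm F m v))"

definition N2_relations :: "('v::ab_group_add) fvosa \<Rightarrow> real \<Rightarrow> (real \<Rightarrow> 'v \<Rightarrow> 'v) \<Rightarrow> (real \<Rightarrow> 'v \<Rightarrow> 'v)
    \<Rightarrow> (real \<Rightarrow> 'v \<Rightarrow> 'v) \<Rightarrow> (real \<Rightarrow> 'v \<Rightarrow> 'v) \<Rightarrow> bool" where
  "N2_relations F c L J Gp' Gm' \<longleftrightarrow>
    (\<forall>m\<in>\<int>. \<forall>n\<in>\<int>. \<forall>v. J m (J n v) - J n (J m v) = (if m + n = 0 then cs F (complex_of_real (c / 3 * m)) (v) else 0)) \<and>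
    (\<forall>m\<in>\<int>. \<forall>r\<in>hZ. \<forall>v. J m (Gp' r v) - Gp' r (J m v) = Gp' (m + r) v) \<and>
    (\<forall>m\<in>\<int>. \<forall>r\<in>hZ. \<forall>v. J m (Gm' r v) - Gm' r (J m v) = - Gm' (m + r) v) \<and>
    (\<forall>m\<in>\<int>. \<forall>r\<in>hZ. \<forall>v. L m (Gp' r v) - Gp' r (L m v) = cs F (complex_of_real (m / 2 - r)) (Gp' (m + r) v)) \<and>
    (\<forall>m\<in>\<int>. \<forall>r\<in>hZ. \<forall>v. L m (Gm' r v) - Gm' r (L m v) = cs F (complex_of_real (m / 2 - r)) (Gm' (m + r) v)) \<and>
    (\<forall>m\<in>\<int>. \<forall>n\<in>\<int>. \<forall>v. L m (J n v) - J n (L m v) = cs F (complex_of_real (- n)) (J (m + n) v)) \<and>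
    (\<forall>r\<in>hZ. \<forall>s\<in>hZ. \<forall>v. Gp' r (Gp' s v) + Gp' s (Gp' r v) = 0) \<and>
    (\<forall>r\<in>hZ. \<forall>s\<in>hZ. \<forall>v. Gm' r (Gm' s v) + Gm' s (Gm' r v) = 0) \<and>
    (\<forall>r\<in>hZ. \<forall>s\<in>hZ. \<forall>v. Gp' r (Gm' s v) + Gm' s (Gp' r v)
        = L (r + s) v + cs F (complex_of_real ((r - s) / 2)) (J (r + s) v)
          + (if r + s = 0 then cs F (complex_of_real (c / 6 * (r ^ 2 - 1/4))) (v) else 0))"

definition even_hol :: "('v::ab_group_add) fvosa \<Rightarrow> ('v \<Rightarrow> 'v) set" where
  "even_hol F = {Lm F m | m. m \<in> \<int>} \<union> {Jm F m | m. m \<in> \<int>}"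
definition odd_hol :: "('v::ab_group_add) fvosa \<Rightarrow> ('v \<Rightarrow> 'v) set" where
  "odd_hol F = {Gp F r | r. r \<in> hZ} \<union> {Gm F r | r. r \<in> hZ}"
definition even_ahol :: "('v::ab_group_add) fvosa \<Rightarrow> ('v \<Rightarrow> 'v) set" where
  "even_ahol F = {Lbm F m | m. m \<in> \<int>} \<union> {Jbm F m | m. m \<in> \<int>}"
definition odd_ahol :: "('v::ab_group_add) fvosa \<Rightarrow> ('v \<Rightarrow> 'v) set" where
  "odd_ahol F = {Gbp F r | r. r \<in> hZ} \<union> {Gbm F r | r. r \<in> hZ}"

definition semisimple_real :: "('v::ab_group_add) fvosa \<Rightarrow> ('v \<Rightarrow> 'v) \<Rightarrow> bool" where
  "semisimple_real F A \<longleftrightarrow> (\<forall>v. \<exists>S g. finite S \<and> (\<forall>p\<in>S. A (g p) = cs F (complex_of_real p) (g p)) \<and> v = sum g S)"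

definition unitary_N22_full_VOSA :: "('v::ab_group_add) fvosa \<Rightarrow> bool" where
  "unitary_N22_full_VOSA F \<longleftrightarrow>
    full_VOSA F \<and>
    taup F \<in> Fgr F (3/2) 0 \<and> taum F \<in> Fgr F (3/2) 0 \<and> Jvec F \<in> Fgr F 1 0 \<and>
    taubp F \<in> Fgr F 0 (3/2) \<and> taubm F \<in> Fgr F 0 (3/2) \<and> Jbvec F \<in> Fgr F 0 1 \<and>
    hol_field F (taup F) \<and> hol_field F (taum F) \<and> hol_field F (Jvec F) \<and>
    ahol_field F (taubp F) \<and> ahol_field F (taubm F) \<and> ahol_field F (Jbvec F) \<and>
    N2_relations F (cch F) (Lm F) (Jm F) (Gp F) (Gm F) \<and>
    N2_relations F (ccb F) (Lbm F) (Jbm F) (Gbp F) (Gbm F) \<and>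
    (\<forall>A\<in>even_hol F \<union> odd_hol F. \<forall>B\<in>even_ahol F. \<forall>v. A (B v) = B (A v)) \<and>
    (\<forall>A\<in>even_hol F. \<forall>B\<in>odd_ahol F. \<forall>v. A (B v) = B (A v)) \<and>
    (\<forall>A\<in>odd_hol F. \<forall>B\<in>odd_ahol F. \<forall>v. A (B v) + B (A v) = 0) \<and>
    semisimple_real F (Jm F 0) \<and> semisimple_real F (Jbm F 0) \<and>
    (\<forall>v h hb p q. v \<noteq> 0 \<and> v \<in> Fgr F h hb \<and> Jm F 0 v = cs F (complex_of_real p) (v) \<and> Jbm F 0 v = cs F (complex_of_real q) v \<longrightarrow>
        p - q \<in> \<int> \<and> ((p - q) / 2 \<in> \<int> \<longleftrightarrow> h - hb \<in> \<int>)) \<and>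
    (\<forall>v. Vector_Spaces.linear (cs F) (*) (bform F v)) \<and> (\<forall>u v. bform F u v = bform F v u) \<and> bform F (vac F) (vac F) = 1 \<and>
    (\<forall>a h hb u v r0 s0 M. a \<in> Fgr F h hb \<longrightarrow>
        (\<forall>j k. M < j \<or> M < k \<longrightarrow> (Lm F 1 ^^ j) ((Lbm F 1 ^^ k) a) = 0) \<longrightarrow>
        bform F u (vY F a r0 s0 v)
          = (-1) powi \<lfloor>(h - hb) + 2 * (h - hb) ^ 2\<rfloor> *
            (\<Sum>j\<le>M. \<Sum>k\<le>M. complex_of_real (1 / (fact j * fact k)) *
               bform F (vY F ((Lm F 1 ^^ j) ((Lbm F 1 ^^ k) a))
                          (2 * h - real j - r0 - 2) (2 * hb - real k - s0 - 2) u) v)) \<and>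
    antilin F (phi F) \<and> (\<forall>v. phi F (phi F v) = v) \<and>
    (\<forall>a r s b. phi F (vY F a r s b) = vY F (phi F a) r s (phi F b)) \<and>
    phi F (vac F) = vac F \<and> phi F (omg F) = omg F \<and> phi F (omgb F) = omgb F \<and>
    phi F (Jvec F) = - Jvec F \<and> phi F (taup F) = taum F \<and> phi F (taum F) = taup F \<and>
    phi F (Jbvec F) = - Jbvec F \<and> phi F (taubp F) = - taubm F \<and> phi F (taubm F) = - taubp F \<and>
    (\<forall>v. v \<noteq> 0 \<longrightarrow> Im (bform F (phi F v) v) = 0 \<and> 0 < Re (bform F (phi F v) v))"

definition Ccc :: "('v::ab_group_add) fvosa \<Rightarrow> real \<Rightarrow> real \<Rightarrow> 'v set" where
  "Ccc F p q = {v. Jm F 0 v = cs F (complex_of_real p) (v) \<and> Jbm F 0 v = cs F (complex_of_real q) (v) \<and>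
     (\<forall>n\<in>\<int>. n \<ge> 1 \<longrightarrow> Lm F n v = 0 \<and> Lbm F n v = 0 \<and> Jm F n v = 0 \<and> Jbm F n v = 0) \<and>
     (\<forall>r\<in>hZ. r \<ge> 1/2 \<longrightarrow> Gp F r v = 0 \<and> Gm F r v = 0 \<and> Gbp F r v = 0 \<and> Gbm F r v = 0) \<and>
     Gp F (-1/2) v = 0 \<and> Gbp F (-1/2) v = 0}"

definition dop :: "('v::ab_group_add) fvosa \<Rightarrow> 'v \<Rightarrow> 'v" where
  "dop F v = Gp F (-1/2) v + Gbp F (-1/2) v"

definition kerd :: "('v::ab_group_add) fvosa \<Rightarrow> 'v set" where
  "kerd F = {v. dop F v = 0}"

definition imd :: "('v::ab_group_add) fvosa \<Rightarrow> 'v set" where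
  "imd F = range (dop F)"

text \<open>cohomology classes as cosets x + Im d; H(F,d) = ker d / Im d\<close>
definition cls :: "('v::ab_group_add) fvosa \<Rightarrow> 'v \<Rightarrow> 'v set" where
  "cls F x = {x + y | y. y \<in> imd F}"

definition Hcoh :: "('v::ab_group_add) fvosa \<Rightarrow> 'v set set" where
  "Hcoh F = cls F ` kerd F"

definition cset_add :: "'v::ab_group_add set \<Rightarrow> 'v set \<Rightarrow> 'v set" where
  "cset_add X Y = {x + y | x y. x \<in> X \<and> y \<in> Y}"
definition cset_scale :: "('v::ab_group_add) fvosa \<Rightarrow> complex \<Rightarrow> 'v set \<Rightarrow> 'v set" where
  "cset_scale F c X = {cs F c x + y | x y. x \<in> X \<and> y \<in> imd F}"

text \<open>the external direct sum of the C^(p,q)(F)_cc over (p,q) in R^2: finitely supported families\<close>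
definition CCsum :: "('v::ab_group_add) fvosa \<Rightarrow> (real \<times> real \<Rightarrow> 'v) set" where
  "CCsum F = {f. finite {pq. f pq \<noteq> 0} \<and> (\<forall>p q. f (p, q) \<in> Ccc F p q)}"

definition total :: "(real \<times> real \<Rightarrow> 'v::ab_group_add) \<Rightarrow> 'v" where
  "total f = sum f {pq. f pq \<noteq> 0}"

definition ccmap :: "('v::ab_group_add) fvosa \<Rightarrow> (real \<times> real \<Rightarrow> 'v) \<Rightarrow> 'v set" where
  "ccmap F f = cls F (total f)"

end

theory Submission
  imports Defs
begin

(* Hodge theory for d = G+(-1/2) + Gbar+(-1/2). For the positive definite Hermitian form
   (phi u, v) the adjoint of d is d* = G-(1/2) + Gbar-(1/2), and the N=2 relations give
   d d = 0 and d d* + d* d = Delta = (L(0) - J(0)/2) + (Lbar(0) - Jbar(0)/2). Every vector is a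
   finite sum of joint eigenvectors of L(0), Lbar(0), J(0), Jbar(0), and on such a vector Delta
   is the scalar (h - p/2) + (hbar - q/2). By the unitarity bounds h >= p/2 and hbar >= q/2 this
   scalar is nonnegative, and it vanishes exactly on chiral-chiral primaries. Hence every
   vector is a sum of chiral-chiral primaries plus some Delta y; if that vector is closed then
   so is Delta y, which forces d* d y = 0 and Delta y = d d* y. Injectivity: an exact sum of
   chiral-chiral primaries is also killed by d*, and exact vectors killed by d* vanish. *)

section \<open>Eigenvectors of commuting linear maps\<close>

context vector_space
begin

lemma eigenvectors_sum_eq_0_imp_eq_0:
  assumes T: "Vector_Spaces.linear scale scale T" and "finite S" and "inj_on \<alpha> S"
    and "\<And>x. x \<in> S \<Longrightarrow> T (g x) = scale (\<alpha> x) (g x)" and "sum g S = 0"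
  shows "\<forall>x\<in>S. g x = 0"
proof -
  interpret T: Vector_Spaces.linear scale scale T by (fact T)
  show ?thesis
    using assms(2-)
  proof (induction S arbitrary: g rule: finite_induct)
    case empty
    then show ?case by simp
  next
    case (insert a S)
    let ?g' = "\<lambda>x. scale (\<alpha> x - \<alpha> a) (g x)"
    have ga: "sum g S = - g a"
      using insert.prems(3) insert.hyps by (simp add: eq_neg_iff_add_eq_0 add.commute)
    have "sum ?g' S = T (sum g S) - scale (\<alpha> a) (sum g S)"
      using insert.prems(2)
      by (simp add: T.sum scale_sum_right sum_subtractf scale_left_diff_distrib)
    also have "\<dots> = 0"
      using insert.prems(2)[of a] by (simp add: ga T.neg)
    finally have "\<forall>x\<in>S. ?g' x = 0"
      using insert by (intro insert.IH) (auto simp: inj_on_def T.scale scale_left_commute)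
    then have "\<forall>x\<in>S. g x = 0"
      using insert.prems(1) insert.hyps(2) by (auto simp: inj_on_def)
    then show ?case
      using insert by simp
  qed
qed

lemma joint_eigenvectors_sum_eq_0_imp_eq_0:
  assumes A: "Vector_Spaces.linear scale scale A" and B: "Vector_Spaces.linear scale scale B"
    and "finite S" and inj: "inj_on (\<lambda>x. (\<alpha> x, \<beta> x)) S"
    and eigA: "\<And>x. x \<in> S \<Longrightarrow> A (g x) = scale (\<alpha> x) (g x)"
    and eigB: "\<And>x. x \<in> S \<Longrightarrow> B (g x) = scale (\<beta> x) (g x)"
    and sum0: "sum g S = 0"
  shows "\<forall>x\<in>S. g x = 0"
proof -
  interpret A: Vector_Spaces.linear scale scale A by (fact A)
  let ?fibre = "\<lambda>c. {x \<in> S. \<alpha> x = c}"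
  have "\<forall>c\<in>\<alpha> ` S. sum g (?fibre c) = 0"
  proof (rule eigenvectors_sum_eq_0_imp_eq_0[OF A])
    show "sum (\<lambda>c. sum g (?fibre c)) (\<alpha> ` S) = 0"
      using sum0 sum.image_gen[OF \<open>finite S\<close>, of g \<alpha>] by simp
    show "A (sum g (?fibre c)) = scale c (sum g (?fibre c))" if "c \<in> \<alpha> ` S" for c
      using eigA by (simp add: A.sum scale_sum_right)
  qed (use \<open>finite S\<close> in auto)
  moreover have "\<forall>x\<in>?fibre c. g x = 0" if "sum g (?fibre c) = 0" for c
    by (rule eigenvectors_sum_eq_0_imp_eq_0[OF B, where \<alpha> = \<beta>])
       (use that \<open>finite S\<close> inj eigB in \<open>auto simp: inj_on_def\<close>)
  ultimately show ?thesis
    by blast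
qed

lemma eigencomponents_inherit_eigenvector:
  assumes T: "Vector_Spaces.linear scale scale T" and A: "Vector_Spaces.linear scale scale A"
    and comm: "\<And>y. A (T y) = T (A y)" and "finite S" and "inj_on \<alpha> S"
    and eig: "\<And>x. x \<in> S \<Longrightarrow> T (g x) = scale (\<alpha> x) (g x)"
    and A_eig: "A (sum g S) = scale a (sum g S)"
  shows "\<forall>x\<in>S. A (g x) = scale a (g x)"
proof -
  interpret T: Vector_Spaces.linear scale scale T by (fact T)
  interpret A: Vector_Spaces.linear scale scale A by (fact A)
  have "\<forall>x\<in>S. A (g x) - scale a (g x) = 0"
  proof (rule eigenvectors_sum_eq_0_imp_eq_0[OF T \<open>finite S\<close> \<open>inj_on \<alpha> S\<close>])
    show "T (A (g x) - scale a (g x)) = scale (\<alpha> x) (A (g x) - scale a (g x))" if "x \<in> S" for x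
      using eig[OF that] comm[of "g x", symmetric]
      by (simp add: T.diff T.scale A.scale scale_left_commute scale_right_diff_distrib)
    show "(\<Sum>x\<in>S. A (g x) - scale a (g x)) = 0"
      using A_eig by (simp add: sum_subtractf A.sum scale_sum_right)
  qed
  then show ?thesis
    by simp
qed

lemma eigenvector_shift:
  assumes X: "Vector_Spaces.linear scale scale X"
    and comm: "T (X x) = X (T x) + scale \<delta> (X x)" and eig: "T x = scale \<alpha> x"
  shows "T (X x) = scale (\<alpha> + \<delta>) (X x)"
proof -
  interpret X: Vector_Spaces.linear scale scale X by (fact X)
  show ?thesis
    using comm by (simp add: eig X.scale scale_left_distrib)
qed

end

section \<open>Unitary representations of the N=2 superconformal algebra\<close>

lemma hZ_halves: "- (3/2) \<in> hZ" "- (1/2) \<in> hZ" "1/2 \<in> hZ"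
  by (simp_all add: hZ_def)

abbreviation real_scale :: "('v::ab_group_add) fvosa \<Rightarrow> real \<Rightarrow> 'v \<Rightarrow> 'v" where
  "real_scale F a \<equiv> cs F (complex_of_real a)"

lemma N2_relationsD:
  fixes F :: "('v::ab_group_add) fvosa" and c :: real and L J P M :: "real \<Rightarrow> 'v \<Rightarrow> 'v"
  assumes N2: "N2_relations F c L J P M"
  shows "m \<in> \<int> \<Longrightarrow> n \<in> \<int> \<Longrightarrow> J m (J n v) - J n (J m v)
      = (if m + n = 0 then real_scale F (c / 3 * m) v else 0)"
    "m \<in> \<int> \<Longrightarrow> r \<in> hZ \<Longrightarrow> J m (P r v) - P r (J m v) = P (m + r) v"
    "m \<in> \<int> \<Longrightarrow> r \<in> hZ \<Longrightarrow> J m (M r v) - M r (J m v) = - M (m + r) v"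
    "m \<in> \<int> \<Longrightarrow> r \<in> hZ \<Longrightarrow> L m (P r v) - P r (L m v) = real_scale F (m / 2 - r) (P (m + r) v)"
    "m \<in> \<int> \<Longrightarrow> r \<in> hZ \<Longrightarrow> L m (M r v) - M r (L m v) = real_scale F (m / 2 - r) (M (m + r) v)"
    "m \<in> \<int> \<Longrightarrow> n \<in> \<int> \<Longrightarrow> L m (J n v) - J n (L m v) = real_scale F (- n) (J (m + n) v)"
    "r \<in> hZ \<Longrightarrow> s \<in> hZ \<Longrightarrow> P r (P s v) + P s (P r v) = 0"
    "r \<in> hZ \<Longrightarrow> s \<in> hZ \<Longrightarrow> P r (M s v) + M s (P r v)
      = L (r + s) v + real_scale F ((r - s) / 2) (J (r + s) v)
        + (if r + s = 0 then real_scale F (c / 6 * (r ^ 2 - 1/4)) v else 0)"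
  using N2 unfolding N2_relations_def by simp_all

locale unitary_N2_rep =
  fixes F :: "('v::ab_group_add) fvosa" and H :: "'v \<Rightarrow> 'v \<Rightarrow> complex"
    and c :: real and L J P M :: "real \<Rightarrow> 'v \<Rightarrow> 'v"
  assumes vector_space: "vector_space (cs F)"
    and H_linear: "Vector_Spaces.linear (cs F) (*) (H u)"
    and H_pos: "v \<noteq> 0 \<Longrightarrow> Im (H v v) = 0 \<and> 0 < Re (H v v)"
    and L_linear: "Vector_Spaces.linear (cs F) (cs F) (L n)"
    and J_linear: "Vector_Spaces.linear (cs F) (cs F) (J n)"
    and P_linear: "Vector_Spaces.linear (cs F) (cs F) (P n)"
    and M_linear: "Vector_Spaces.linear (cs F) (cs F) (M n)"
    and N2: "N2_relations F c L J P M"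
    and Virasoro: "\<forall>m\<in>\<int>. \<forall>n\<in>\<int>. \<forall>v. L m (L n v) - L n (L m v)
        = real_scale F (m - n) (L (m + n) v)
          + (if m + n = 0 then real_scale F (c / 12 * (m ^ 3 - m)) v else 0)"
    and P_adjoint: "H u (P r v) = H (M (- r) u) v"
    and M_adjoint: "H u (M r v) = H (P (- r) u) v"
begin

sublocale vs: vector_space "cs F"
  by (fact vector_space)

lemma H_add: "H u (x + y) = H u x + H u y"
  and H_scale: "H u (cs F a x) = a * H u x"
  using H_linear unfolding Vector_Spaces.linear_iff by blast+

lemma H_zero: "H u 0 = 0"
  using H_scale[of u 0 0] by simp

lemma H_diff: "H u (x - y) = H u x - H u y"
  using H_add[of u "x - y" y] by (simp add: eq_diff_eq)

lemma H_nonneg: "Im (H v v) = 0 \<and> 0 \<le> Re (H v v)"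
  using H_pos[of v] by (cases "v = 0") (auto simp: H_zero)

lemma H_self_eq_0: "Re (H v v) = 0 \<Longrightarrow> v = 0"
  using H_pos by force

lemmas N2_rules = N2_relationsD[OF N2]

lemma L0_commutators:
  "n \<in> \<int> \<Longrightarrow> L 0 (L n v) = L n (L 0 v) + real_scale F (- n) (L n v)"
  "n \<in> \<int> \<Longrightarrow> L 0 (J n v) = J n (L 0 v) + real_scale F (- n) (J n v)"
  "r \<in> hZ \<Longrightarrow> L 0 (P r v) = P r (L 0 v) + real_scale F (- r) (P r v)"
  "r \<in> hZ \<Longrightarrow> L 0 (M r v) = M r (L 0 v) + real_scale F (- r) (M r v)"
  using Virasoro[rule_format, of 0 n v] N2_rules(6)[of 0 n v] N2_rules(4,5)[of 0 r v]
  by (simp_all add: diff_eq_eq add.commute)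

lemma J0_commutators:
  "n \<in> \<int> \<Longrightarrow> J 0 (L n v) = L n (J 0 v) + real_scale F 0 (L n v)"
  "n \<in> \<int> \<Longrightarrow> n \<noteq> 0 \<Longrightarrow> J 0 (J n v) = J n (J 0 v) + real_scale F 0 (J n v)"
  "r \<in> hZ \<Longrightarrow> J 0 (P r v) = P r (J 0 v) + real_scale F 1 (P r v)"
  "r \<in> hZ \<Longrightarrow> J 0 (M r v) = M r (J 0 v) + real_scale F (- 1) (M r v)"
  using N2_rules(6)[of n 0 v] N2_rules(1)[of 0 n v] N2_rules(2,3)[of 0 r v]
  by (simp_all add: diff_eq_eq add.commute)

lemma P_nilpotent: "r \<in> hZ \<Longrightarrow> P r (P r v) = 0"
  using N2_rules(7)[of r r v] vs.scale_left_distrib[of 1 1 "P r (P r v)"] by simp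

lemma P_M_anticommutator_half:
  "P (- (1/2)) (M (1/2) x) + M (1/2) (P (- (1/2)) x) = L 0 x - real_scale F (1/2) (J 0 x)"
  using N2_rules(8)[OF hZ_halves(2,3), of x] by (simp add: power2_eq_square)

lemma chiral_norm_identity:
  assumes "L 0 x = real_scale F a x" and "J 0 x = real_scale F b x"
  shows "Re (H (M (1/2) x) (M (1/2) x)) + Re (H (P (- (1/2)) x) (P (- (1/2)) x))
    = (a - b / 2) * Re (H x x)"
proof -
  have "H (M (1/2) x) (M (1/2) x) + H (P (- (1/2)) x) (P (- (1/2)) x)
      = H x (L 0 x - real_scale F (1/2) (J 0 x))"
    using P_M_anticommutator_half by (metis H_add P_adjoint M_adjoint minus_minus)
  also have "\<dots> = complex_of_real (a - b / 2) * H x x"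
    using assms by (simp add: H_diff H_scale algebra_simps)
  finally show ?thesis
    by (metis Re_complex_of_real Im_complex_of_real plus_complex.sel(1) times_complex.sel(1)
        mult_zero_left diff_zero)
qed

lemma chiral_bound:
  assumes "x \<noteq> 0" and "L 0 x = real_scale F a x" and "J 0 x = real_scale F b x"
  shows "b / 2 \<le> a"
proof -
  have "0 \<le> (a - b / 2) * Re (H x x)"
    using chiral_norm_identity[OF assms(2,3)] H_nonneg by (metis add_nonneg_nonneg)
  then show ?thesis
    using H_pos[OF assms(1)] by (simp add: zero_le_mult_iff)
qed

lemma chiral_bound_saturated:
  assumes "L 0 x = real_scale F (b / 2) x" and "J 0 x = real_scale F b x"
  shows "M (1/2) x = 0" and "P (- (1/2)) x = 0"
proof -
  have "Re (H (M (1/2) x) (M (1/2) x)) + Re (H (P (- (1/2)) x) (P (- (1/2)) x)) = 0"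
    using chiral_norm_identity[OF assms] by simp
  then show "M (1/2) x = 0" and "P (- (1/2)) x = 0"
    using H_nonneg by (simp_all add: add_nonneg_eq_0_iff H_self_eq_0)
qed

lemma mode_annihilates_chiral:
  assumes X: "Vector_Spaces.linear (cs F) (cs F) X"
    and L0X: "\<And>y. L 0 (X y) = X (L 0 y) + real_scale F (- k) (X y)"
    and J0X: "\<And>y. J 0 (X y) = X (J 0 y) + real_scale F e (X y)"
    and eig: "L 0 x = real_scale F (b / 2) x" "J 0 x = real_scale F b x"
    and "0 < k + e / 2"
  shows "X x = 0"
proof (rule ccontr)
  assume "X x \<noteq> 0"
  moreover have "L 0 (X x) = real_scale F (b / 2 - k) (X x)"
    using vs.eigenvector_shift[OF X L0X[of x] eig(1)] by simp
  moreover have "J 0 (X x) = real_scale F (b + e) (X x)"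
    using vs.eigenvector_shift[OF X J0X[of x] eig(2)] by simp
  ultimately have "(b + e) / 2 \<le> b / 2 - k"
    by (rule chiral_bound)
  with \<open>0 < k + e / 2\<close> show False
    by simp
qed

lemma chiral_primary:
  assumes "L 0 x = real_scale F (b / 2) x" and "J 0 x = real_scale F b x"
  shows "\<forall>n\<in>\<int>. 1 \<le> n \<longrightarrow> L n x = 0 \<and> J n x = 0"
    and "\<forall>r\<in>hZ. 1/2 \<le> r \<longrightarrow> P r x = 0 \<and> M r x = 0"
    and "P (- (1/2)) x = 0"
proof -
  show "\<forall>n\<in>\<int>. 1 \<le> n \<longrightarrow> L n x = 0 \<and> J n x = 0"
  proof (intro ballI impI conjI)
    fix n :: real
    assume n: "n \<in> \<int>" "1 \<le> n"
    show "L n x = 0"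
      by (rule mode_annihilates_chiral[where X = "L n", OF L_linear L0_commutators(1)[OF n(1)]
            J0_commutators(1)[OF n(1)] assms]) (use n in simp)
    show "J n x = 0"
      by (rule mode_annihilates_chiral[where X = "J n", OF J_linear L0_commutators(2)[OF n(1)]
            J0_commutators(2)[OF n(1)] assms]) (use n in simp_all)
  qed
  show "\<forall>r\<in>hZ. 1/2 \<le> r \<longrightarrow> P r x = 0 \<and> M r x = 0"
  proof (intro ballI impI conjI)
    fix r :: real
    assume r: "r \<in> hZ" "1/2 \<le> r"
    show "P r x = 0"
      by (rule mode_annihilates_chiral[where X = "P r", OF P_linear L0_commutators(3)[OF r(1)]
            J0_commutators(3)[OF r(1)] assms]) (use r in simp)
    show "M r x = 0"
    proof (cases "r = 1/2")
      case True
      then show ?thesis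
        using chiral_bound_saturated(1)[OF assms] by (simp only:)
    next
      case False
      show ?thesis
        by (rule mode_annihilates_chiral[where X = "M r", OF M_linear L0_commutators(4)[OF r(1)]
              J0_commutators(4)[OF r(1)] assms]) (use False r in simp)
    qed
  qed
  show "P (- (1/2)) x = 0"
    by (fact chiral_bound_saturated(2)[OF assms])
qed

end

section \<open>Unitary N=(2,2) full vertex operator superalgebras\<close>

lemma funpow_eq_0:
  fixes f :: "'a::zero \<Rightarrow> 'a"
  assumes "f 0 = 0" and "f a = 0" and "0 < n"
  shows "(f ^^ n) a = 0"
proof -
  obtain k where "n = Suc k"
    using \<open>0 < n\<close> gr0_implies_Suc by blast
  moreover have "(f ^^ k) 0 = 0"
    using \<open>f 0 = 0\<close> by (induction k) simp_all
  ultimately show ?thesis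
    using \<open>f a = 0\<close> by (simp add: funpow_Suc_right del: funpow.simps)
qed

locale unitary_N22 =
  fixes F :: "('v::ab_group_add) fvosa"
  assumes unitary: "unitary_N22_full_VOSA F"
begin

lemma
  shows vector_space: "vector_space (cs F)"
    and vY_linear: "\<forall>a r s. Vector_Spaces.linear (cs F) (cs F) (vY F a r s)"
    and vY_linear_left: "\<forall>r s b. Vector_Spaces.linear (cs F) (cs F) (\<lambda>a. vY F a r s b)"
    and graded: "\<forall>v. \<exists>S g. finite S \<and> (\<forall>x\<in>S. g x \<in> Fgr F (fst x) (snd x)) \<and> v = sum g S"
    and vacuum_creation: "\<forall>a r s. vY F a r s (vac F) \<noteq> 0 \<longrightarrow> (- r - 1 \<in> \<nat> \<and> - s - 1 \<in> \<nat>)"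
    and vacuum_state: "\<forall>a. vY F a (-1) (-1) (vac F) = a"
    and Virasoro_hol: "\<forall>m\<in>\<int>. \<forall>n\<in>\<int>. \<forall>v. Lm F m (Lm F n v) - Lm F n (Lm F m v)
        = cs F (complex_of_real (m - n)) (Lm F (m + n) v)
          + (if m + n = 0 then cs F (complex_of_real (cch F / 12 * (m ^ 3 - m))) v else 0)"
    and Virasoro_ahol: "\<forall>m\<in>\<int>. \<forall>n\<in>\<int>. \<forall>v. Lbm F m (Lbm F n v) - Lbm F n (Lbm F m v)
        = cs F (complex_of_real (m - n)) (Lbm F (m + n) v)
          + (if m + n = 0 then cs F (complex_of_real (ccb F / 12 * (m ^ 3 - m))) v else 0)"
  by (insert unitary, unfold unitary_N22_full_VOSA_def full_VOSA_def) (elim conjE, assumption)+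

lemma
  shows tau_weights: "taup F \<in> Fgr F (3/2) 0" "taum F \<in> Fgr F (3/2) 0"
      "taubp F \<in> Fgr F 0 (3/2)" "taubm F \<in> Fgr F 0 (3/2)"
    and N2_hol: "N2_relations F (cch F) (Lm F) (Jm F) (Gp F) (Gm F)"
    and N2_ahol: "N2_relations F (ccb F) (Lbm F) (Jbm F) (Gbp F) (Gbm F)"
    and commute_even: "\<forall>A\<in>even_hol F \<union> odd_hol F. \<forall>B\<in>even_ahol F. \<forall>v. A (B v) = B (A v)"
    and commute_odd: "\<forall>A\<in>even_hol F. \<forall>B\<in>odd_ahol F. \<forall>v. A (B v) = B (A v)"
    and anticommute_odd: "\<forall>A\<in>odd_hol F. \<forall>B\<in>odd_ahol F. \<forall>v. A (B v) + B (A v) = 0"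
    and J0_semisimple: "semisimple_real F (Jm F 0)" "semisimple_real F (Jbm F 0)"
    and bform_linear: "\<forall>v. Vector_Spaces.linear (cs F) (*) (bform F v)"
    and bform_sym: "\<forall>u v. bform F u v = bform F v u"
    and bform_invariant: "\<forall>a h hb u v r0 s0 M. a \<in> Fgr F h hb \<longrightarrow>
        (\<forall>j k. M < j \<or> M < k \<longrightarrow> (Lm F 1 ^^ j) ((Lbm F 1 ^^ k) a) = 0) \<longrightarrow>
        bform F u (vY F a r0 s0 v)
          = (-1) powi \<lfloor>(h - hb) + 2 * (h - hb) ^ 2\<rfloor> *
            (\<Sum>j\<le>M. \<Sum>k\<le>M. complex_of_real (1 / (fact j * fact k)) *
               bform F (vY F ((Lm F 1 ^^ j) ((Lbm F 1 ^^ k) a))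
                          (2 * h - real j - r0 - 2) (2 * hb - real k - s0 - 2) u) v)"
    and phi_antilinear: "antilin F (phi F)"
    and phi_hom: "\<forall>a r s b. phi F (vY F a r s b) = vY F (phi F a) r s (phi F b)"
    and phi_tau: "phi F (taup F) = taum F" "phi F (taum F) = taup F"
      "phi F (taubp F) = - taubm F" "phi F (taubm F) = - taubp F"
    and positive: "\<forall>v. v \<noteq> 0 \<longrightarrow> Im (bform F (phi F v) v) = 0 \<and> 0 < Re (bform F (phi F v) v)"
  by (insert unitary, unfold unitary_N22_full_VOSA_def) (elim conjE, assumption)+

sublocale vs: vector_space "cs F"
  by (fact vector_space)

lemmas mode_defs = Lm_def Lbm_def Gp_def Gm_def Jm_def Gbp_def Gbm_def Jbm_def

lemma mode_linear:
  "Vector_Spaces.linear (cs F) (cs F) (Lm F n)" "Vector_Spaces.linear (cs F) (cs F) (Lbm F n)"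
  "Vector_Spaces.linear (cs F) (cs F) (Jm F n)" "Vector_Spaces.linear (cs F) (cs F) (Jbm F n)"
  "Vector_Spaces.linear (cs F) (cs F) (Gp F n)" "Vector_Spaces.linear (cs F) (cs F) (Gm F n)"
  "Vector_Spaces.linear (cs F) (cs F) (Gbp F n)" "Vector_Spaces.linear (cs F) (cs F) (Gbm F n)"
  unfolding mode_defs using vY_linear by blast+

lemma vY_add: "vY F a r s (x + y) = vY F a r s x + vY F a r s y"
  and vY_scale: "vY F a r s (cs F c x) = cs F c (vY F a r s x)"
  using vY_linear unfolding Vector_Spaces.linear_iff by blast+

lemma vY_zero: "vY F a r s 0 = 0"
  using vY_scale[of a r s 0 0] by simp

lemma mode_zero:
  "Lm F n 0 = 0" "Lbm F n 0 = 0" "Jm F n 0 = 0" "Jbm F n 0 = 0"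
  "Gp F n 0 = 0" "Gm F n 0 = 0" "Gbp F n 0 = 0" "Gbm F n 0 = 0"
  unfolding mode_defs by (fact vY_zero)+

lemma mode_add:
  "Lm F n (x + y) = Lm F n x + Lm F n y" "Lbm F n (x + y) = Lbm F n x + Lbm F n y"
  "Jm F n (x + y) = Jm F n x + Jm F n y" "Jbm F n (x + y) = Jbm F n x + Jbm F n y"
  "Gp F n (x + y) = Gp F n x + Gp F n y" "Gm F n (x + y) = Gm F n x + Gm F n y"
  "Gbp F n (x + y) = Gbp F n x + Gbp F n y" "Gbm F n (x + y) = Gbm F n x + Gbm F n y"
  unfolding mode_defs by (fact vY_add)+

lemma mode_scale:
  "Lm F n (cs F c x) = cs F c (Lm F n x)" "Lbm F n (cs F c x) = cs F c (Lbm F n x)"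
  "Jm F n (cs F c x) = cs F c (Jm F n x)" "Jbm F n (cs F c x) = cs F c (Jbm F n x)"
  "Gp F n (cs F c x) = cs F c (Gp F n x)" "Gm F n (cs F c x) = cs F c (Gm F n x)"
  "Gbp F n (cs F c x) = cs F c (Gbp F n x)" "Gbm F n (cs F c x) = cs F c (Gbm F n x)"
  unfolding mode_defs by (fact vY_scale)+

lemma vacuum_annihilation: "- r - 1 < 0 \<or> - s - 1 < 0 \<Longrightarrow> vY F a r s (vac F) = 0"
  using vacuum_creation by (force simp: Nats_altdef2)

lemma modes_on_vacuum:
  "Gp F (- (3/2)) (vac F) = taup F" "Gm F (- (3/2)) (vac F) = taum F"
  "Gbp F (- (3/2)) (vac F) = taubp F" "Gbm F (- (3/2)) (vac F) = taubm F"
  "Lm F 1 (vac F) = 0" "Lbm F 1 (vac F) = 0"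
  "Gp F (- (1/2)) (vac F) = 0" "Gm F (- (1/2)) (vac F) = 0"
  "Gbp F (- (1/2)) (vac F) = 0" "Gbm F (- (1/2)) (vac F) = 0"
  unfolding mode_defs by (simp_all add: vacuum_state vacuum_annihilation)

lemma hol_ahol_commute:
  "X \<in> even_hol F \<union> odd_hol F \<Longrightarrow> Y \<in> even_ahol F \<Longrightarrow> X (Y v) = Y (X v)"
  "X \<in> even_hol F \<Longrightarrow> Y \<in> odd_ahol F \<Longrightarrow> X (Y v) = Y (X v)"
  "X \<in> odd_hol F \<Longrightarrow> Y \<in> odd_ahol F \<Longrightarrow> X (Y v) + Y (X v) = 0"
  using commute_even commute_odd anticommute_odd by blast+

lemma mode_classes:
  "m \<in> \<int> \<Longrightarrow> Lm F m \<in> even_hol F" "m \<in> \<int> \<Longrightarrow> Jm F m \<in> even_hol F"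
  "r \<in> hZ \<Longrightarrow> Gp F r \<in> odd_hol F" "r \<in> hZ \<Longrightarrow> Gm F r \<in> odd_hol F"
  "m \<in> \<int> \<Longrightarrow> Lbm F m \<in> even_ahol F" "m \<in> \<int> \<Longrightarrow> Jbm F m \<in> even_ahol F"
  "r \<in> hZ \<Longrightarrow> Gbp F r \<in> odd_ahol F" "r \<in> hZ \<Longrightarrow> Gbm F r \<in> odd_ahol F"
  unfolding even_hol_def odd_hol_def even_ahol_def odd_ahol_def by blast+

lemma tau_quasi_primary:
  "Lm F 1 (taup F) = 0" "Lm F 1 (taum F) = 0" "Lbm F 1 (taubp F) = 0" "Lbm F 1 (taubm F) = 0"
  "Lbm F 1 (taup F) = 0" "Lbm F 1 (taum F) = 0" "Lm F 1 (taubp F) = 0" "Lm F 1 (taubm F) = 0"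
proof -
  \<comment> \<open>tau = G(-3/2) vac; L(1) and Lbar(1) kill vac and commute with G(-3/2) up to a
    multiple of G(-1/2), which kills vac too\<close>
  note vac = modes_on_vacuum mode_zero
  show "Lm F 1 (taup F) = 0" "Lm F 1 (taum F) = 0"
    using N2_relationsD(4,5)[OF N2_hol _ hZ_halves(1), of 1 "vac F"] by (simp_all add: vac)
  show "Lbm F 1 (taubp F) = 0" "Lbm F 1 (taubm F) = 0"
    using N2_relationsD(4,5)[OF N2_ahol _ hZ_halves(1), of 1 "vac F"] by (simp_all add: vac)
  have "Gp F (- (3/2)) \<in> even_hol F \<union> odd_hol F" "Gm F (- (3/2)) \<in> even_hol F \<union> odd_hol F"
    "Lbm F 1 \<in> even_ahol F" "Lm F 1 \<in> even_hol F"
    "Gbp F (- (3/2)) \<in> odd_ahol F" "Gbm F (- (3/2)) \<in> odd_ahol F"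
    using mode_classes hZ_halves(1) by simp_all
  note commute = hol_ahol_commute(1)[OF this(1,3)] hol_ahol_commute(1)[OF this(2,3)]
    hol_ahol_commute(2)[OF this(4,5)] hol_ahol_commute(2)[OF this(4,6)]
  show "Lbm F 1 (taup F) = 0" "Lbm F 1 (taum F) = 0"
    "Lm F 1 (taubp F) = 0" "Lm F 1 (taubm F) = 0"
    using commute[of "vac F"] by (simp_all add: vac)
qed

lemma bform_invariant_quasi_primary:
  assumes "a \<in> Fgr F h hb" and "Lm F 1 a = 0" and "Lbm F 1 a = 0"
  shows "bform F u (vY F a r s v) = (-1) powi \<lfloor>(h - hb) + 2 * (h - hb) ^ 2\<rfloor>
    * bform F (vY F a (2 * h - r - 2) (2 * hb - s - 2) u) v"
proof -
  have "(Lm F 1 ^^ j) ((Lbm F 1 ^^ k) a) = 0" if "0 < j \<or> 0 < k" for j k :: nat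
  proof (cases "k = 0")
    case False
    then have "(Lbm F 1 ^^ k) a = 0"
      using assms(3) by (simp add: funpow_eq_0 mode_zero)
    then show ?thesis
      using funpow_eq_0[of "Lm F 1" 0 j] by (cases "j = 0") (simp_all add: mode_zero)
  qed (use that assms(2) in \<open>simp add: funpow_eq_0 mode_zero\<close>)
  then show ?thesis
    using bform_invariant[rule_format, of a h hb 0 u r s v] assms(1) by simp
qed

text \<open>The sign in the invariance formula is \<open>1\<close> for weight \<open>(3/2, 0)\<close> and \<open>-1\<close> for
  weight \<open>(0, 3/2)\<close>.\<close>

lemma G_bform_adjoint:
  "bform F u (Gp F r v) = bform F (Gp F (- r) u) v"
  "bform F u (Gm F r v) = bform F (Gm F (- r) u) v"
  "bform F u (Gbp F r v) = - bform F (Gbp F (- r) u) v"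
  "bform F u (Gbm F r v) = - bform F (Gbm F (- r) u) v"
  unfolding mode_defs
  using bform_invariant_quasi_primary[OF tau_weights(1) tau_quasi_primary(1,5)]
    bform_invariant_quasi_primary[OF tau_weights(2) tau_quasi_primary(2,6)]
    bform_invariant_quasi_primary[OF tau_weights(3) tau_quasi_primary(7,3)]
    bform_invariant_quasi_primary[OF tau_weights(4) tau_quasi_primary(8,4)]
  by (simp_all add: power2_eq_square algebra_simps)

lemma phi_G:
  "phi F (Gp F r u) = Gm F r (phi F u)" "phi F (Gm F r u) = Gp F r (phi F u)"
  "phi F (Gbp F r u) = - Gbm F r (phi F u)" "phi F (Gbm F r u) = - Gbp F r (phi F u)"
proof -
  have neg: "vY F (- a) r s b = - vY F a r s b" for a r s b
  proof -
    interpret Vector_Spaces.linear "cs F" "cs F" "\<lambda>a. vY F a r s b"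
      using vY_linear_left by blast
    show ?thesis
      by (fact neg)
  qed
  show "phi F (Gp F r u) = Gm F r (phi F u)" "phi F (Gm F r u) = Gp F r (phi F u)"
    "phi F (Gbp F r u) = - Gbm F r (phi F u)" "phi F (Gbm F r u) = - Gbp F r (phi F u)"
    unfolding mode_defs by (simp_all add: phi_hom phi_tau neg)
qed

definition herm :: "'v \<Rightarrow> 'v \<Rightarrow> complex" where
  "herm u v = bform F (phi F u) v"

lemma G_adjoint:
  "herm u (Gp F r v) = herm (Gm F (- r) u) v" "herm u (Gm F r v) = herm (Gp F (- r) u) v"
  "herm u (Gbp F r v) = herm (Gbm F (- r) u) v" "herm u (Gbm F r v) = herm (Gbp F (- r) u) v"
proof -
  have "bform F (- x) v = - bform F x v" for x v
  proof -
    interpret Vector_Spaces.linear "cs F" "(*)" "bform F v"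
      using bform_linear by blast
    show ?thesis
      using neg bform_sym by metis
  qed
  then show "herm u (Gp F r v) = herm (Gm F (- r) u) v" "herm u (Gm F r v) = herm (Gp F (- r) u) v"
    "herm u (Gbp F r v) = herm (Gbm F (- r) u) v" "herm u (Gbm F r v) = herm (Gbp F (- r) u) v"
    unfolding herm_def by (simp_all add: G_bform_adjoint phi_G)
qed

lemma herm_linear: "Vector_Spaces.linear (cs F) (*) (herm u)"
  using bform_linear by (simp add: herm_def[abs_def])

lemma herm_pos: "v \<noteq> 0 \<Longrightarrow> Im (herm v v) = 0 \<and> 0 < Re (herm v v)"
  using positive unfolding herm_def by blast

lemma herm_add_left: "herm (x + y) v = herm x v + herm y v"
proof -
  interpret Vector_Spaces.linear "cs F" "(*)" "bform F v"
    using bform_linear by blast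
  show ?thesis
    using phi_antilinear bform_sym add unfolding herm_def antilin_def by metis
qed

lemma herm_zero_left: "herm 0 v = 0"
  using herm_add_left[of 0 0 v] by simp

sublocale hol: unitary_N2_rep F herm "cch F" "Lm F" "Jm F" "Gp F" "Gm F"
  by (rule unitary_N2_rep.intro)
    (fact vector_space herm_linear herm_pos mode_linear N2_hol Virasoro_hol G_adjoint)+

sublocale ahol: unitary_N2_rep F herm "ccb F" "Lbm F" "Jbm F" "Gbp F" "Gbm F"
  by (rule unitary_N2_rep.intro)
    (fact vector_space herm_linear herm_pos mode_linear N2_ahol Virasoro_ahol G_adjoint)+

lemma zero_modes_commute:
  "Lm F 0 (Jm F 0 v) = Jm F 0 (Lm F 0 v)" "Lbm F 0 (Jbm F 0 v) = Jbm F 0 (Lbm F 0 v)"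
  "Lbm F 0 (Jm F 0 v) = Jm F 0 (Lbm F 0 v)" "Lm F 0 (Jbm F 0 v) = Jbm F 0 (Lm F 0 v)"
  "Jbm F 0 (Jm F 0 v) = Jm F 0 (Jbm F 0 v)"
  using hol.L0_commutators(2)[of 0 v] ahol.L0_commutators(2)[of 0 v]
    hol_ahol_commute(1)[OF _ mode_classes(5)] hol_ahol_commute(1)[OF _ mode_classes(6)]
    mode_classes(1,2)
  by auto

definition dop_adj :: "'v \<Rightarrow> 'v" where
  "dop_adj v = Gm F (1/2) v + Gbm F (1/2) v"

definition Laplacian :: "'v \<Rightarrow> 'v" where
  "Laplacian v = (Lm F 0 v - real_scale F (1/2) (Jm F 0 v))
    + (Lbm F 0 v - real_scale F (1/2) (Jbm F 0 v))"

lemma dop_linear: "Vector_Spaces.linear (cs F) (cs F) (dop F)"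
  and dop_adj_linear: "Vector_Spaces.linear (cs F) (cs F) dop_adj"
  and Laplacian_linear: "Vector_Spaces.linear (cs F) (cs F) Laplacian"
  unfolding Vector_Spaces.linear_iff dop_def dop_adj_def Laplacian_def
  by (simp_all add: vector_space mode_add mode_scale vs.scale_left_commute algebra_simps)

lemmas dop_hom = dop_linear[THEN module_hom_linearI]
  and dop_adj_hom = dop_adj_linear[THEN module_hom_linearI]
  and Laplacian_hom = Laplacian_linear[THEN module_hom_linearI]

lemma anticommute_half_modes:
  "Gp F (- (1/2)) (Gbp F (- (1/2)) v) + Gbp F (- (1/2)) (Gp F (- (1/2)) v) = 0"
  "Gp F (- (1/2)) (Gbm F (1/2) v) + Gbm F (1/2) (Gp F (- (1/2)) v) = 0"
  "Gm F (1/2) (Gbp F (- (1/2)) v) + Gbp F (- (1/2)) (Gm F (1/2) v) = 0"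
  using hol_ahol_commute(3) mode_classes(3,4,7,8) hZ_halves(2,3) by blast+

lemma dop_dop: "dop F (dop F x) = 0"
  using hol.P_nilpotent[OF hZ_halves(2)] ahol.P_nilpotent[OF hZ_halves(2)]
    anticommute_half_modes(1)[of x]
  unfolding dop_def by (simp add: mode_add algebra_simps)

lemma herm_dop_adj: "herm u (dop_adj v) = herm (dop F u) v"
  unfolding dop_def dop_adj_def by (simp add: hol.H_add herm_add_left G_adjoint)

lemma Laplacian_eq: "dop F (dop_adj y) + dop_adj (dop F y) = Laplacian y"
proof -
  have "dop F (dop_adj y) + dop_adj (dop F y)
      = (Gp F (- (1/2)) (Gm F (1/2) y) + Gm F (1/2) (Gp F (- (1/2)) y))
      + (Gbp F (- (1/2)) (Gbm F (1/2) y) + Gbm F (1/2) (Gbp F (- (1/2)) y))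
      + (Gp F (- (1/2)) (Gbm F (1/2) y) + Gbm F (1/2) (Gp F (- (1/2)) y))
      + (Gm F (1/2) (Gbp F (- (1/2)) y) + Gbp F (- (1/2)) (Gm F (1/2) y))"
    unfolding dop_def dop_adj_def by (simp add: mode_add algebra_simps)
  also have "\<dots> = Laplacian y"
    unfolding Laplacian_def hol.P_M_anticommutator_half ahol.P_M_anticommutator_half
      anticommute_half_modes by simp
  finally show ?thesis .
qed

lemma imd_subspace: "vs.subspace (imd F)"
proof -
  interpret dop: Vector_Spaces.linear "cs F" "cs F" "dop F"
    by (fact dop_linear)
  show ?thesis
    unfolding imd_def by (rule dop.subspace_image[OF vs.subspace_UNIV])
qed

lemma imd_dop_adj_eq_0:
  assumes "w \<in> imd F" and "dop_adj w = 0"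
  shows "w = 0"
proof -
  obtain z where "w = dop F z"
    using assms(1) unfolding imd_def by blast
  then have "herm w w = herm z (dop_adj w)"
    by (simp add: herm_dop_adj)
  then show ?thesis
    using assms(2) by (simp add: hol.H_zero hol.H_self_eq_0)
qed

lemma closed_Laplacian_exact:
  assumes "dop F (Laplacian y) = 0"
  shows "Laplacian y = dop F (dop_adj y)"
proof -
  let ?z = "dop_adj (dop F y)"
  have "dop F ?z = 0"
    using assms Laplacian_eq[of y] dop_dop[of "dop_adj y"]
    by (metis add_diff_cancel_left' diff_zero module_hom.diff[OF dop_hom])
  then have "?z = 0"
    using herm_dop_adj[of ?z "dop F y"] by (simp add: herm_zero_left hol.H_self_eq_0)
  then show ?thesis
    using Laplacian_eq[of y] by simp
qed

definition joint_eigen :: "'v \<Rightarrow> real \<Rightarrow> real \<Rightarrow> real \<Rightarrow> real \<Rightarrow> bool" where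
  "joint_eigen x h hb p q \<longleftrightarrow> Lm F 0 x = real_scale F h x \<and> Lbm F 0 x = real_scale F hb x
     \<and> Jm F 0 x = real_scale F p x \<and> Jbm F 0 x = real_scale F q x"

lemma Laplacian_joint_eigen:
  "joint_eigen x h hb p q \<Longrightarrow> Laplacian x = real_scale F ((h - p / 2) + (hb - q / 2)) x"
  unfolding joint_eigen_def Laplacian_def
  by (simp add: algebra_simps)

lemma Ccc_zero: "0 \<in> Ccc F p q"
  unfolding Ccc_def by (simp add: mode_zero)

lemma joint_eigen_Ccc_or_Laplacian_range:
  assumes eig: "joint_eigen x h hb p q"
  shows "x \<in> Ccc F p q \<or> x \<in> range Laplacian"
proof (cases "x = 0")
  case False
  have hol: "Lm F 0 x = real_scale F h x" "Jm F 0 x = real_scale F p x"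
    and ahol: "Lbm F 0 x = real_scale F hb x" "Jbm F 0 x = real_scale F q x"
    using eig unfolding joint_eigen_def by auto
  have "p / 2 \<le> h" "q / 2 \<le> hb"
    using hol.chiral_bound[OF False hol] ahol.chiral_bound[OF False ahol] by auto
  show ?thesis
  proof (cases "(h - p / 2) + (hb - q / 2) = 0")
    case True
    then have "h = p / 2" "hb = q / 2"
      using \<open>p / 2 \<le> h\<close> \<open>q / 2 \<le> hb\<close> by auto
    then have "x \<in> Ccc F p q"
      using hol.chiral_primary[of x p] ahol.chiral_primary[of x q] hol ahol
      unfolding Ccc_def by auto
    then show ?thesis ..
  next
    case False
    let ?e = "(h - p / 2) + (hb - q / 2)"
    have "complex_of_real (1 / ?e) * complex_of_real ?e = 1"
      using False by (metis of_real_mult of_real_1 divide_self_if times_divide_eq_left mult_1)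
    then have "Laplacian (real_scale F (1 / ?e) x) = x"
      by (simp only: module_hom.scale[OF Laplacian_hom] Laplacian_joint_eigen[OF eig]
          vs.scale_scale vs.scale_one)
    then show ?thesis
      by (metis rangeI)
  qed
qed (simp add: Ccc_zero)

lemma semisimple_decomposition:
  assumes "semisimple_real F T" and T: "Vector_Spaces.linear (cs F) (cs F) T"
  obtains S k where "finite S" "v = sum k S" "\<And>p. p \<in> S \<Longrightarrow> T (k p) = real_scale F p (k p)"
    "\<And>A a p. Vector_Spaces.linear (cs F) (cs F) A \<Longrightarrow> (\<And>y. A (T y) = T (A y)) \<Longrightarrow>
      A v = cs F a v \<Longrightarrow> p \<in> S \<Longrightarrow> A (k p) = cs F a (k p)"
proof -
  obtain S k where S: "finite S" "\<forall>p\<in>S. T (k p) = real_scale F p (k p)" "v = sum k S"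
    using assms(1) unfolding semisimple_real_def by blast
  have inj: "inj_on complex_of_real S"
    by (simp add: inj_on_def)
  show ?thesis
  proof (rule that[OF S(1,3)])
    show "T (k p) = real_scale F p (k p)" if "p \<in> S" for p
      using S(2) that by blast
    show "A (k p) = cs F a (k p)"
      if "Vector_Spaces.linear (cs F) (cs F) A" "\<And>y. A (T y) = T (A y)" "A v = cs F a v" "p \<in> S"
      for A a p
      using vs.eigencomponents_inherit_eigenvector[OF T that(1,2) S(1) inj, of k a] S(2,3) that(3,4)
      by simp
  qed
qed

lemma Fgr_Jm0_decomposition:
  assumes "u \<in> Fgr F h hb"
  obtains S k where "finite S" "u = sum k S"
    "\<And>p. p \<in> S \<Longrightarrow> k p \<in> Fgr F h hb \<and> Jm F 0 (k p) = real_scale F p (k p)"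
proof -
  obtain S k where "finite S" "u = sum k S" "\<And>p. p \<in> S \<Longrightarrow> Jm F 0 (k p) = real_scale F p (k p)"
    and inherit: "\<And>A a p. Vector_Spaces.linear (cs F) (cs F) A \<Longrightarrow>
      (\<And>y. A (Jm F 0 y) = Jm F 0 (A y)) \<Longrightarrow> A u = cs F a u \<Longrightarrow> p \<in> S \<Longrightarrow> A (k p) = cs F a (k p)"
    using semisimple_decomposition[OF J0_semisimple(1) mode_linear(3), of u] by blast
  moreover have "k p \<in> Fgr F h hb" if "p \<in> S" for p
    using inherit[OF mode_linear(1)[of 0] zero_modes_commute(1) _ that]
      inherit[OF mode_linear(2)[of 0] zero_modes_commute(3) _ that] assms
    unfolding Fgr_def by blast
  ultimately show ?thesis
    using that by blast
qed

lemma Fgr_joint_eigen_decomposition: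
  assumes "u \<in> Fgr F h hb" and "Jm F 0 u = real_scale F p u"
  obtains S k where "finite S" "u = sum k S" "\<And>q. q \<in> S \<Longrightarrow> joint_eigen (k q) h hb p q"
proof -
  obtain S k where "finite S" "u = sum k S" "\<And>q. q \<in> S \<Longrightarrow> Jbm F 0 (k q) = real_scale F q (k q)"
    and inherit: "\<And>A a q. Vector_Spaces.linear (cs F) (cs F) A \<Longrightarrow>
      (\<And>y. A (Jbm F 0 y) = Jbm F 0 (A y)) \<Longrightarrow> A u = cs F a u \<Longrightarrow> q \<in> S \<Longrightarrow> A (k q) = cs F a (k q)"
    using semisimple_decomposition[OF J0_semisimple(2) mode_linear(4), of u] by blast
  moreover have "joint_eigen (k q) h hb p q" if "q \<in> S" for q
    using inherit[OF mode_linear(1)[of 0] zero_modes_commute(4) _ that]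
      inherit[OF mode_linear(2)[of 0] zero_modes_commute(2) _ that]
      inherit[OF mode_linear(3)[of 0] zero_modes_commute(5)[symmetric] _ that]
      assms that \<open>\<And>q. q \<in> S \<Longrightarrow> Jbm F 0 (k q) = real_scale F q (k q)\<close>
    unfolding Fgr_def joint_eigen_def by blast
  ultimately show ?thesis
    using that by blast
qed

lemma joint_eigen_induct [case_names zero add joint_eigen]:
  assumes zero: "P 0" and add: "\<And>a b. P a \<Longrightarrow> P b \<Longrightarrow> P (a + b)"
    and joint_eigen: "\<And>x h hb p q. joint_eigen x h hb p q \<Longrightarrow> P x"
  shows "P v"
proof -
  have sum: "P (sum g S)" if "finite S" "\<And>x. x \<in> S \<Longrightarrow> P (g x)" for S and g :: "'i \<Rightarrow> 'v"
    using that by (induction S rule: finite_induct) (simp_all add: zero add)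
  have "P w" if w: "w \<in> Fgr F h hb" for w h hb
  proof -
    obtain S k where "finite S" "w = sum k S"
      and k: "\<And>p. p \<in> S \<Longrightarrow> k p \<in> Fgr F h hb \<and> Jm F 0 (k p) = real_scale F p (k p)"
      using Fgr_Jm0_decomposition[OF w] by blast
    moreover have "P (k p)" if "p \<in> S" for p
      using Fgr_joint_eigen_decomposition[of "k p" h hb p] k[OF that]
      by (metis joint_eigen sum)
    ultimately show ?thesis
      by (simp add: sum)
  qed
  then show ?thesis
    using graded by (metis sum)
qed

end

section \<open>Cohomology of d\<close>

lemma total_eq_sum:
  assumes "finite T" and "{pq. f pq \<noteq> 0} \<subseteq> T"
  shows "total f = sum f T"
  unfolding total_def by (rule sum.mono_neutral_left[OF assms]) auto

lemma
  fixes f g :: "real \<times> real \<Rightarrow> 'v::ab_group_add"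
  assumes "finite {pq. f pq \<noteq> 0}" and "finite {pq. g pq \<noteq> 0}"
  shows total_add: "total (\<lambda>pq. f pq + g pq) = total f + total g"
    and total_diff: "total (\<lambda>pq. f pq - g pq) = total f - total g"
proof -
  let ?T = "{pq. f pq \<noteq> 0} \<union> {pq. g pq \<noteq> 0}"
  have "finite ?T"
    using assms by blast
  have sum_T: "total h = sum h ?T" if "{pq. h pq \<noteq> 0} \<subseteq> ?T" for h :: "real \<times> real \<Rightarrow> 'v"
    by (rule total_eq_sum[OF \<open>finite ?T\<close> that])
  have "total f = sum f ?T" "total g = sum g ?T"
    "total (\<lambda>pq. f pq + g pq) = (\<Sum>pq\<in>?T. f pq + g pq)"
    "total (\<lambda>pq. f pq - g pq) = (\<Sum>pq\<in>?T. f pq - g pq)"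
    by (auto intro!: sum_T)
  then show "total (\<lambda>pq. f pq + g pq) = total f + total g"
    and "total (\<lambda>pq. f pq - g pq) = total f - total g"
    by (simp_all add: sum.distrib sum_subtractf)
qed

lemma total_single: "total (\<lambda>pq. if pq = a then x else 0) = x"
  by (subst total_eq_sum[of "{a}"]) auto

lemma total_zero: "total (\<lambda>pq. 0) = 0"
  by (simp add: total_def)

context unitary_N22
begin

lemma Ccc_subspace: "vs.subspace (Ccc F p q)"
  unfolding vs.subspace_def Ccc_def
  by (simp add: mode_zero mode_add mode_scale vs.scale_right_distrib vs.scale_left_commute)

lemma CCsum_finite: "f \<in> CCsum F \<Longrightarrow> finite {pq. f pq \<noteq> 0}"
  and CCsum_mem: "f \<in> CCsum F \<Longrightarrow> f pq \<in> Ccc F (fst pq) (snd pq)"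
  unfolding CCsum_def by (cases pq; auto)+

lemma CCsum_add: "f \<in> CCsum F \<Longrightarrow> g \<in> CCsum F \<Longrightarrow> (\<lambda>pq. f pq + g pq) \<in> CCsum F"
  and CCsum_diff: "f \<in> CCsum F \<Longrightarrow> g \<in> CCsum F \<Longrightarrow> (\<lambda>pq. f pq - g pq) \<in> CCsum F"
proof -
  assume f: "f \<in> CCsum F" and g: "g \<in> CCsum F"
  have "finite ({pq. f pq \<noteq> 0} \<union> {pq. g pq \<noteq> 0})"
    using CCsum_finite[OF f] CCsum_finite[OF g] by blast
  then have "finite {pq. f pq + g pq \<noteq> 0}" "finite {pq. f pq - g pq \<noteq> 0}"
    by (auto intro: rev_finite_subset)
  then show "(\<lambda>pq. f pq + g pq) \<in> CCsum F" "(\<lambda>pq. f pq - g pq) \<in> CCsum F"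
    using f g vs.subspace_add[OF Ccc_subspace] vs.subspace_diff[OF Ccc_subspace]
    unfolding CCsum_def by auto
qed

lemma CCsum_zero: "(\<lambda>pq. 0) \<in> CCsum F"
  unfolding CCsum_def by (simp add: Ccc_zero)

lemma CCsum_single: "x \<in> Ccc F p q \<Longrightarrow> (\<lambda>pq. if pq = (p, q) then x else 0) \<in> CCsum F"
  unfolding CCsum_def by (auto simp: Ccc_zero)

lemma total_scale:
  "finite {pq. f pq \<noteq> 0} \<Longrightarrow> total (\<lambda>pq. cs F c (f pq)) = cs F c (total f)"
  by (subst total_eq_sum[of "{pq. f pq \<noteq> 0}"]) (auto simp: total_def vs.scale_sum_right)

lemma total_CCsum_harmonic:
  assumes "f \<in> CCsum F"
  shows "dop F (total f) = 0" and "dop_adj (total f) = 0"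
proof -
  have "Gm F (1/2) x = 0" "Gbm F (1/2) x = 0" if "x \<in> Ccc F p q" for x p q
    using that hZ_halves(2,3) unfolding Ccc_def by auto
  then show "dop F (total f) = 0" "dop_adj (total f) = 0"
    using CCsum_mem[OF assms]
    unfolding total_def module_hom.sum[OF dop_hom] module_hom.sum[OF dop_adj_hom]
    by (auto simp: dop_def dop_adj_def Ccc_def intro!: sum.neutral)
qed

lemma Hodge_decomposition: "\<exists>f\<in>CCsum F. \<exists>y. v = total f + Laplacian y"
proof (induction v rule: joint_eigen_induct)
  case zero
  have "0 = total (\<lambda>pq. 0) + Laplacian 0"
    by (simp add: total_zero module_hom.zero[OF Laplacian_hom])
  then show ?case
    using CCsum_zero by blast
next
  case (add a b)
  then obtain f g y z where "f \<in> CCsum F" "g \<in> CCsum F"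
    and "a = total f + Laplacian y" "b = total g + Laplacian z"
    by blast
  then have "a + b = total (\<lambda>pq. f pq + g pq) + Laplacian (y + z)"
    by (simp add: total_add CCsum_finite module_hom.add[OF Laplacian_hom] algebra_simps)
  then show ?case
    using CCsum_add[OF \<open>f \<in> CCsum F\<close> \<open>g \<in> CCsum F\<close>] by blast
next
  case (joint_eigen x h hb p q)
  then consider "x \<in> Ccc F p q" | y where "x = Laplacian y"
    using joint_eigen_Ccc_or_Laplacian_range by blast
  then show ?case
  proof cases
    case 1
    have "x = total (\<lambda>pq. if pq = (p, q) then x else 0) + Laplacian 0"
      by (simp add: total_single module_hom.zero[OF Laplacian_hom])
    then show ?thesis
      using CCsum_single[OF 1] by blast
  next
    case (2 y)
    then have "x = total (\<lambda>pq. 0) + Laplacian y"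
      by (simp add: total_zero)
    then show ?thesis
      using CCsum_zero by blast
  qed
qed

lemma cls_eq_iff: "cls F a = cls F b \<longleftrightarrow> a - b \<in> imd F"
proof
  assume "cls F a = cls F b"
  moreover have "a \<in> cls F a"
    unfolding cls_def using vs.subspace_0[OF imd_subspace] by force
  ultimately show "a - b \<in> imd F"
    unfolding cls_def by auto
next
  have sub: "cls F a \<subseteq> cls F b" if "a - b \<in> imd F" for a b
  proof
    fix z
    assume "z \<in> cls F a"
    then obtain y where "y \<in> imd F" "z = b + ((a - b) + y)"
      unfolding cls_def by auto
    then show "z \<in> cls F b"
      unfolding cls_def using vs.subspace_add[OF imd_subspace that] by blast
  qed
  assume "a - b \<in> imd F"
  moreover have "b - a \<in> imd F"
    using vs.subspace_neg[OF imd_subspace \<open>a - b \<in> imd F\<close>] by simp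
  ultimately show "cls F a = cls F b"
    using sub by blast
qed

lemma cls_add: "cls F (a + b) = cset_add (cls F a) (cls F b)"
proof (intro set_eqI iffI)
  fix z
  assume "z \<in> cls F (a + b)"
  then obtain y where "y \<in> imd F" "z = (a + y) + (b + 0)"
    unfolding cls_def by (auto simp: algebra_simps)
  then show "z \<in> cset_add (cls F a) (cls F b)"
    unfolding cset_add_def cls_def using vs.subspace_0[OF imd_subspace] by blast
next
  fix z
  assume "z \<in> cset_add (cls F a) (cls F b)"
  then obtain y1 y2 where "y1 \<in> imd F" "y2 \<in> imd F" "z = (a + y1) + (b + y2)"
    unfolding cset_add_def cls_def by blast
  moreover have "(a + y1) + (b + y2) = (a + b) + (y1 + y2)"
    by (simp add: algebra_simps)
  ultimately show "z \<in> cls F (a + b)"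
    unfolding cls_def using vs.subspace_add[OF imd_subspace] by auto
qed

lemma cls_scale: "cls F (cs F c a) = cset_scale F c (cls F a)"
proof (intro set_eqI iffI)
  fix z
  assume "z \<in> cls F (cs F c a)"
  then obtain y where "y \<in> imd F" "z = cs F c (a + 0) + y"
    unfolding cls_def by auto
  then show "z \<in> cset_scale F c (cls F a)"
    unfolding cset_scale_def cls_def using vs.subspace_0[OF imd_subspace] by blast
next
  fix z
  assume "z \<in> cset_scale F c (cls F a)"
  then obtain y1 y where "y1 \<in> imd F" "y \<in> imd F" "z = cs F c (a + y1) + y"
    unfolding cset_scale_def cls_def by blast
  moreover have "cs F c (a + y1) + y = cs F c a + (cs F c y1 + y)"
    by (simp add: vs.scale_right_distrib)
  ultimately show "z \<in> cls F (cs F c a)"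
    unfolding cls_def using vs.subspace_add[OF imd_subspace] vs.subspace_scale[OF imd_subspace]
    by auto
qed

lemma ccmap_inj_on: "inj_on (ccmap F) (CCsum F)"
proof (rule inj_onI)
  fix f g
  assume f: "f \<in> CCsum F" and g: "g \<in> CCsum F" and "ccmap F f = ccmap F g"
  let ?e = "\<lambda>pq. f pq - g pq"
  have e: "?e \<in> CCsum F"
    by (rule CCsum_diff[OF f g])
  have "total ?e \<in> imd F"
    using \<open>ccmap F f = ccmap F g\<close> by (simp add: ccmap_def cls_eq_iff total_diff CCsum_finite f g)
  then have "sum ?e {pq. ?e pq \<noteq> 0} = 0"
    using imd_dop_adj_eq_0 total_CCsum_harmonic(2)[OF e] unfolding total_def by blast
  moreover have "Jm F 0 (?e pq) = real_scale F (fst pq) (?e pq)"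
    "Jbm F 0 (?e pq) = real_scale F (snd pq) (?e pq)" for pq
    using CCsum_mem[OF e, of pq] unfolding Ccc_def by auto
  ultimately have "\<forall>pq\<in>{pq. ?e pq \<noteq> 0}. ?e pq = 0"
    by (intro vs.joint_eigenvectors_sum_eq_0_imp_eq_0[OF mode_linear(3) mode_linear(4)
          CCsum_finite[OF e], where \<alpha> = "\<lambda>pq. complex_of_real (fst pq)"
          and \<beta> = "\<lambda>pq. complex_of_real (snd pq)"]) (auto simp: inj_on_def prod_eq_iff)
  then show "f = g"
    by (auto simp: fun_eq_iff)
qed

lemma ccmap_image: "ccmap F ` CCsum F = Hcoh F"
proof
  show "ccmap F ` CCsum F \<subseteq> Hcoh F"
    unfolding Hcoh_def ccmap_def kerd_def using total_CCsum_harmonic(1) by blast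
  show "Hcoh F \<subseteq> ccmap F ` CCsum F"
  proof
    fix X
    assume "X \<in> Hcoh F"
    then obtain v where v: "dop F v = 0" "X = cls F v"
      unfolding Hcoh_def kerd_def by blast
    obtain f y where f: "f \<in> CCsum F" and v_eq: "v = total f + Laplacian y"
      using Hodge_decomposition by blast
    have "dop F (Laplacian y) = 0"
      using v(1) total_CCsum_harmonic(1)[OF f] by (simp add: v_eq module_hom.add[OF dop_hom])
    then have "v - total f = dop F (dop_adj y)"
      using closed_Laplacian_exact v_eq by simp
    then have "v - total f \<in> imd F"
      unfolding imd_def by simp
    then have "X = ccmap F f"
      by (simp add: v(2) ccmap_def cls_eq_iff)
    then show "X \<in> ccmap F ` CCsum F"
      using f by blast
  qed
qed

end

theorem proposition2p11:
  fixes F :: "('v::ab_group_add) fvosa"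
  assumes "unitary_N22_full_VOSA F"
  shows "(\<forall>f\<in>CCsum F. total f \<in> kerd F)
       \<and> (\<forall>f\<in>CCsum F. \<forall>g\<in>CCsum F.
            ccmap F (\<lambda>pq. f pq + g pq) = cset_add (ccmap F f) (ccmap F g))
       \<and> (\<forall>f\<in>CCsum F. \<forall>c. ccmap F (\<lambda>pq. cs F c (f pq)) = cset_scale F c (ccmap F f))
       \<and> bij_betw (ccmap F) (CCsum F) (Hcoh F)"
proof -
  interpret unitary_N22 F
    by (fact unitary_N22.intro[OF assms])
  show ?thesis
    using total_CCsum_harmonic(1) ccmap_inj_on ccmap_image
    by (auto simp: kerd_def ccmap_def bij_betw_def total_add total_scale CCsum_finite
        cls_add cls_scale)
qed

end
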